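(* Consider the classical four-stage fourth-order Runge--Kutta method, with $a_{21}=\frac12$, $a_{32}=\frac12$, $a_{43}=1$, all other $a_{ij}=0$, and $b=(\frac16,\frac13,\frac13,\frac16)$. There is no $\gamma>0$ such that this method preserves positivity for all problems of the form $$u_k'(t)=q_k(u(t),t)\,\frac{u_{k-1}(t)-u_k(t)}{\Delta x},\quad k=1,\dots,N,\qquad u_0:=u_N,\qquad u_k(t_0)=u_k^0\ge0,$$ with nonnegative $q_k$, under the step-size restriction $0\le\Delta t\,q_k(u,t)/\Delta x\le\gamma$ for all $k,u,t$; that is, for every $\gamma>0$ there is such a problem and such a step size for which the method yields a negative solution value.
   Context: Applying an explicit Runge--Kutta method with strictly lower-triangular $A=(a_{ij})$, weights $b$ and nodes $c_i=\sum_ja_{ij}$ to this system with step $\Delta t$ means: $y^i_k=u^n_k+\sum_{j<i}a_{ij}\xi^j_k(y^j_{k-1}-y^j_k)$, $u^{n+1}_k=u^n_k+\sum_ib_i\xi^i_k(y^i_{k-1}-y^i_k)$, with $\xi^j_k=\frac{\Delta t}{\Delta x}q_k(y^j,t_n+c_j\Delta t)$ and periodic indices ($y_0:=y_N$). *)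

theory Defs
  imports Main "HOL.Real"
begin

text \<open>Vectors u = (u_1,...,u_N) are represented as functions nat => real,
only the indices 1..N being meaningful. Periodic predecessor: y_0 := y_N.\<close>

definition prev :: "nat \<Rightarrow> nat \<Rightarrow> nat" where
  "prev N k = (if k = 1 then N else k - 1)"

text \<open>Explicit RK method with strictly lower triangular A (stages indexed 1..s),
nodes c_i = sum_j a_ij.\<close>

definition node :: "(nat \<Rightarrow> nat \<Rightarrow> real) \<Rightarrow> nat \<Rightarrow> real" where
  "node A i = (\<Sum>j\<in>{1..<i}. A i j)"

definition xi :: "(nat \<Rightarrow> nat \<Rightarrow> real) \<Rightarrow> real \<Rightarrow> real
    \<Rightarrow> ((nat \<Rightarrow> real) \<Rightarrow> real \<Rightarrow> nat \<Rightarrow> real) \<Rightarrow> real \<Rightarrow> nat \<Rightarrow> (nat \<Rightarrow> real) \<Rightarrow> nat \<Rightarrow> real" where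
  "xi A dt dx q t j y k = dt / dx * q y (t + node A j * dt) k"

fun stages :: "(nat \<Rightarrow> nat \<Rightarrow> real) \<Rightarrow> nat \<Rightarrow> real \<Rightarrow> real
    \<Rightarrow> ((nat \<Rightarrow> real) \<Rightarrow> real \<Rightarrow> nat \<Rightarrow> real) \<Rightarrow> real \<Rightarrow> (nat \<Rightarrow> real) \<Rightarrow> nat
    \<Rightarrow> (nat \<Rightarrow> real) list" where
  "stages A N dt dx q t u 0 = []"
| "stages A N dt dx q t u (Suc i) =
     (let ys = stages A N dt dx q t u i in
      ys @ [(\<lambda>k. u k + (\<Sum>j\<in>{1..i}. A (Suc i) j * xi A dt dx q t j (ys ! (j - 1)) k
                 * ((ys ! (j - 1)) (prev N k) - (ys ! (j - 1)) k)))])"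

definition erk_step :: "(nat \<Rightarrow> nat \<Rightarrow> real) \<Rightarrow> (nat \<Rightarrow> real) \<Rightarrow> nat \<Rightarrow> nat
    \<Rightarrow> real \<Rightarrow> real \<Rightarrow> ((nat \<Rightarrow> real) \<Rightarrow> real \<Rightarrow> nat \<Rightarrow> real) \<Rightarrow> real
    \<Rightarrow> (nat \<Rightarrow> real) \<Rightarrow> nat \<Rightarrow> real" where
  "erk_step A b s N dt dx q t u =
     (let ys = stages A N dt dx q t u s in
      (\<lambda>k. u k + (\<Sum>i\<in>{1..s}. b i * xi A dt dx q t i (ys ! (i - 1)) k
                 * ((ys ! (i - 1)) (prev N k) - (ys ! (i - 1)) k))))"

definition rk4_A :: "nat \<Rightarrow> nat \<Rightarrow> real" where
  "rk4_A i j = (if i = 2 \<and> j = 1 then 1/2 else if i = 3 \<and> j = 2 then 1/2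
                else if i = 4 \<and> j = 3 then 1 else 0)"

definition rk4_b :: "nat \<Rightarrow> real" where
  "rk4_b i = (if i = 1 \<or> i = 4 then 1/6 else if i = 2 \<or> i = 3 then 1/3 else 0)"

end

theory Submission
  imports Defs
begin

text \<open>Let \<open>q\<close> ignore the solution and be switched on only at the stage times, with
\<open>\<Delta>t q\<^sub>k / \<Delta>x = \<gamma>\<close>: into cell 2 in stage 1 (time 0), into cell 3 in stages 2 and 3 (time 1/2) and
into cell 4 in stage 4 (time 1). Start from a unit mass in cell 1. Then \<open>y\<^sup>3\<close> holds \<open>\<gamma>\<^sup>2/4\<close> in
cell 3, and the stage-3 outflow of that mass is subtracted from cell 3 of \<open>u\<close>, which is empty:
\<open>y\<^sup>4\<close> is \<open>-\<gamma>\<^sup>3/4\<close> in cell 3. The weight \<open>b\<^sub>4 = 1/6\<close> carries this into cell 4, where the new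
value is \<open>-\<gamma>\<^sup>4/24\<close>, negative however small \<open>\<gamma>\<close> is.\<close>

definition relay_coeff :: "real \<Rightarrow> (nat \<Rightarrow> real) \<Rightarrow> real \<Rightarrow> nat \<Rightarrow> real" where
  "relay_coeff \<gamma> y t k =
     (if (t = 0 \<and> k = 2) \<or> (t = 1/2 \<and> k = 3) \<or> (t = 1 \<and> k = 4) then \<gamma> else 0)"

definition unit_mass :: "nat \<Rightarrow> real" where
  "unit_mass k = (if k = 1 then 1 else 0)"

lemma rk4_nodes:
  "node rk4_A 1 = 0" "node rk4_A 2 = 1/2" "node rk4_A 3 = 1/2" "node rk4_A 4 = 1"
  by (simp_all add: node_def rk4_A_def numeral_eq_Suc atLeastLessThanSuc)

lemma rk4_relay_stages:
  "stages rk4_A 4 1 1 (relay_coeff \<gamma>) 0 unit_mass 4 =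
     [unit_mass,
      (\<lambda>k. if k = 1 then 1 else if k = 2 then \<gamma> / 2 else 0),
      (\<lambda>k. if k = 1 then 1 else if k = 3 then \<gamma> ^ 2 / 4 else 0),
      (\<lambda>k. if k = 1 then 1 else if k = 3 then - (\<gamma> ^ 3) / 4 else 0)]"
  using rk4_nodes
  by (simp add: numeral_eq_Suc xi_def prev_def rk4_A_def relay_coeff_def unit_mass_def
      nth_append atLeastAtMostSuc_conv fun_eq_iff power2_eq_square power3_eq_cube)

lemma rk4_relay_step:
  "erk_step rk4_A rk4_b 4 4 1 1 (relay_coeff \<gamma>) 0 unit_mass 4 = - (\<gamma> ^ 4) / 24"
  using rk4_nodes unfolding erk_step_def rk4_relay_stages
  by (simp add: numeral_eq_Suc xi_def prev_def rk4_b_def relay_coeff_def unit_mass_def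
      atLeastAtMostSuc_conv power_numeral_reduce)

theorem proposition8:
  fixes \<gamma> :: real
  assumes "\<gamma> > 0"
  shows "\<exists>(N::nat) (dx::real) (dt::real) (q :: (nat \<Rightarrow> real) \<Rightarrow> real \<Rightarrow> nat \<Rightarrow> real)
           (u0 :: nat \<Rightarrow> real) (t0::real).
     N \<ge> 1 \<and> dx > 0 \<and> dt > 0 \<and>
     (\<forall>y y' t k. (\<forall>i\<in>{1..N}. y i = y' i) \<longrightarrow> q y t k = q y' t k) \<and>
     (\<forall>y t. \<forall>k\<in>{1..N}. 0 \<le> q y t k \<and> dt * q y t k / dx \<le> \<gamma>) \<and>
     (\<forall>k\<in>{1..N}. 0 \<le> u0 k) \<and>
     (\<exists>k\<in>{1..N}. erk_step rk4_A rk4_b 4 N dt dx q t0 u0 k < 0)"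
proof -
  have "erk_step rk4_A rk4_b 4 4 1 1 (relay_coeff \<gamma>) 0 unit_mass 4 < 0"
    using assms by (simp add: rk4_relay_step)
  moreover have "\<forall>y t. \<forall>k\<in>{1..4::nat}. 0 \<le> relay_coeff \<gamma> y t k \<and> 1 * relay_coeff \<gamma> y t k / 1 \<le> \<gamma>"
    using assms by (simp add: relay_coeff_def)
  moreover have "\<forall>y y' t k. relay_coeff \<gamma> y t k = relay_coeff \<gamma> y' t k"
    by (simp add: relay_coeff_def)
  moreover have "\<forall>k. 0 \<le> unit_mass k"
    by (simp add: unit_mass_def)
  ultimately show ?thesis
    by (intro exI[of _ 4] exI[of _ 1] exI[of _ 1] exI[of _ "relay_coeff \<gamma>"]
        exI[of _ unit_mass] exI[of _ 0]) auto
qed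

end
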